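(* Let $G$ be a graph, $d$ a positive integer, $X\subset V(G)$, and let $C(X)$ be the $d$-critical set of $X$. Suppose $B$ is an escape-way in $G$ with $V_{\text{out}}(B)\subset C(X)$. Then $|A_{K(B)}(v)|\geq \deg_G(v)-d$ for every vertex $v\notin C(X)$.
   Context: The $d$-critical set $C(X)$ of a set $X\subset V(G)$ is the terminal set of the following bootstrap percolation process: $X_0=X$, and $X_{i+1}$ is the union of $X_i$ with all vertices $v$ having at least $d$ neighbours at distance at most $2$ from $X_i$ in the graph $G\setminus v$ (vertices of $X_i$ have distance $0$). An oriented subgraph of $G$ is a subgraph with an orientation of each edge, viewed as a digraph on $V(G)$; $N^-_D(v)=\{u:uv\in E(D)\}$; $V_{\text{in}}(D)$ and $V_{\text{out}}(D)$ are the sets of vertices with at least one in-neighbour, resp. out-neighbour, in $D$. An escape-way in $G$ is an oriented subgraph $D$ of $G$ in which every vertex has in-degree at most $1$ and such that whenever $x,y\in V_{\text{in}}(D)$ and $xy\in E(G)$, exactly one of $xy$, $yx$ lies in $E(D)$. For a (bi-)oriented subgraph $D$ (possibly containing both orientations of an edge), $A_D(v)=N_G(v)\setminus\big(V_{\text{in}}(D-v)\cup N^-_D(v)\big)$, where $D-v$ is $D$ with $v$ deleted. $K(D)$ is obtained from $D$ by adding, for every directed edge $uv\in E(D)$, all directed edges $vw$ with $w\in N_G(v)\setminus\{u\}$. *)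

theory Defs
  imports Main
begin

definition graph :: "'a set \<Rightarrow> ('a \<Rightarrow> 'a \<Rightarrow> bool) \<Rightarrow> bool" where
  "graph V E \<longleftrightarrow> finite V \<and> (\<forall>u v. E u v \<longrightarrow> u \<in> V \<and> v \<in> V)
     \<and> (\<forall>u v. E u v \<longrightarrow> E v u) \<and> (\<forall>u. \<not> E u u)"

definition nbhd :: "('a \<Rightarrow> 'a \<Rightarrow> bool) \<Rightarrow> 'a \<Rightarrow> 'a set" where
  "nbhd E v = {u. E v u}"

definition degree :: "('a \<Rightarrow> 'a \<Rightarrow> bool) \<Rightarrow> 'a \<Rightarrow> nat" where
  "degree E v = card (nbhd E v)"

text \<open>u is at distance at most 2 from S in the graph G with vertex v deleted
(vertices of S have distance 0).\<close>
definition near2 :: "('a \<Rightarrow> 'a \<Rightarrow> bool) \<Rightarrow> 'a \<Rightarrow> 'a set \<Rightarrow> 'a \<Rightarrow> bool" where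
  "near2 E v S u \<longleftrightarrow> u \<noteq> v \<and>
     (u \<in> S
      \<or> (\<exists>x\<in>S. x \<noteq> v \<and> E u x)
      \<or> (\<exists>w x. w \<noteq> v \<and> x \<in> S \<and> x \<noteq> v \<and> E u w \<and> E w x))"

definition crit_step :: "'a set \<Rightarrow> ('a \<Rightarrow> 'a \<Rightarrow> bool) \<Rightarrow> nat \<Rightarrow> 'a set \<Rightarrow> 'a set" where
  "crit_step V E d S = S \<union> {v \<in> V. card {u. E v u \<and> near2 E v S u} \<ge> d}"

text \<open>The d-critical set: terminal set of the (monotone) process, i.e. the union
of all stages.\<close>
definition critical_set :: "'a set \<Rightarrow> ('a \<Rightarrow> 'a \<Rightarrow> bool) \<Rightarrow> nat \<Rightarrow> 'a set \<Rightarrow> 'a set" where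
  "critical_set V E d X = (\<Union>i. (crit_step V E d ^^ i) X)"

definition V_in :: "('a \<times> 'a) set \<Rightarrow> 'a set" where
  "V_in D = {v. \<exists>u. (u, v) \<in> D}"

definition V_out :: "('a \<times> 'a) set \<Rightarrow> 'a set" where
  "V_out D = {u. \<exists>v. (u, v) \<in> D}"

definition in_nbhd :: "('a \<times> 'a) set \<Rightarrow> 'a \<Rightarrow> 'a set" where
  "in_nbhd D v = {u. (u, v) \<in> D}"

definition del_vertex :: "('a \<times> 'a) set \<Rightarrow> 'a \<Rightarrow> ('a \<times> 'a) set" where
  "del_vertex D v = {(a, b) \<in> D. a \<noteq> v \<and> b \<noteq> v}"

definition oriented_subgraph :: "('a \<Rightarrow> 'a \<Rightarrow> bool) \<Rightarrow> ('a \<times> 'a) set \<Rightarrow> bool" where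
  "oriented_subgraph E D \<longleftrightarrow> (\<forall>(u, v) \<in> D. E u v) \<and> (\<forall>u v. (u, v) \<in> D \<longrightarrow> (v, u) \<notin> D)"

definition escape_way :: "('a \<Rightarrow> 'a \<Rightarrow> bool) \<Rightarrow> ('a \<times> 'a) set \<Rightarrow> bool" where
  "escape_way E D \<longleftrightarrow> oriented_subgraph E D
     \<and> (\<forall>v. card (in_nbhd D v) \<le> 1 \<and> finite (in_nbhd D v))
     \<and> (\<forall>x y. x \<in> V_in D \<and> y \<in> V_in D \<and> E x y \<longrightarrow> ((x, y) \<in> D \<longleftrightarrow> (y, x) \<notin> D))"

definition A_set :: "('a \<Rightarrow> 'a \<Rightarrow> bool) \<Rightarrow> ('a \<times> 'a) set \<Rightarrow> 'a \<Rightarrow> 'a set" where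
  "A_set E D v = nbhd E v - (V_in (del_vertex D v) \<union> in_nbhd D v)"

definition K_ext :: "('a \<Rightarrow> 'a \<Rightarrow> bool) \<Rightarrow> ('a \<times> 'a) set \<Rightarrow> ('a \<times> 'a) set" where
  "K_ext E D = D \<union> {(v, w). \<exists>u. (u, v) \<in> D \<and> E v w \<and> w \<noteq> u}"

end

theory Submission
  imports Defs
begin

text \<open>A neighbour u of v lies outside A_{K(B)}(v) only if u receives an arc of K(B) from
some vertex other than v, or sends an arc of K(B) to v. Tracing that arc back to B, u is at
distance at most 2 from V_out(B) \<subseteq> C(X) in G - v. As C(X) is terminal for the percolation
process and v \<notin> C(X), fewer than d neighbours of v are that close to C(X) in G - v; hence
at most d - 1 neighbours of v lie outside A_{K(B)}(v).\<close>

lemma graph_finite_nbhd: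
  assumes "graph V E"
  shows "finite (nbhd E v)"
proof (rule finite_subset)
  show "nbhd E v \<subseteq> V" using assms unfolding graph_def nbhd_def by blast
qed (use assms in \<open>simp add: graph_def\<close>)

lemma near2_mono: "near2 E v S u \<Longrightarrow> S \<subseteq> T \<Longrightarrow> near2 E v T u"
  unfolding near2_def by blast

lemma crit_step_funpow_mono:
  "i \<le> j \<Longrightarrow> (crit_step V E d ^^ i) X \<subseteq> (crit_step V E d ^^ j) X"
  by (rule lift_Suc_mono_le[where f = "\<lambda>i. (crit_step V E d ^^ i) X"])
     (auto simp: crit_step_def)

lemma eventually_near2_crit_step:
  assumes "near2 E v (critical_set V E d X) u"
  shows "eventually (\<lambda>i. near2 E v ((crit_step V E d ^^ i) X) u) sequentially"
proof -
  obtain i where "near2 E v ((crit_step V E d ^^ i) X) u"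
    using assms unfolding near2_def critical_set_def by blast
  then show ?thesis
    using near2_mono crit_step_funpow_mono by (metis eventually_sequentiallyI)
qed

lemma card_near2_critical_set_less:
  assumes "graph V E" and "v \<in> V" and "v \<notin> critical_set V E d X"
  shows "card {u. E v u \<and> near2 E v (critical_set V E d X) u} < d"
proof (rule ccontr)
  let ?C = "critical_set V E d X" and ?stage = "\<lambda>i. (crit_step V E d ^^ i) X"
  let ?S = "{u. E v u \<and> near2 E v ?C u}"
  assume "\<not> card ?S < d"
  have fin: "\<And>P. finite {u. E v u \<and> P u}"
    using graph_finite_nbhd[OF assms(1)] unfolding nbhd_def by (rule rev_finite_subset) blast
  have "eventually (\<lambda>i. \<forall>u\<in>?S. near2 E v (?stage i) u) sequentially"
    using fin by (intro eventually_ball_finite) (auto intro: eventually_near2_crit_step)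
  then obtain i where i: "\<forall>u\<in>?S. near2 E v (?stage i) u"
    by (auto simp: eventually_sequentially)
  have "d \<le> card ?S" using \<open>\<not> card ?S < d\<close> by simp
  also have "card ?S \<le> card {u. E v u \<and> near2 E v (?stage i) u}"
    using i fin by (intro card_mono) auto
  finally have "v \<in> ?stage (Suc i)"
    using assms(2) by (simp add: crit_step_def)
  then have "v \<in> ?C" unfolding critical_set_def by blast
  with assms(3) show False by blast
qed

lemma nbhd_diff_A_set_K_ext_near2:
  assumes "graph V E" and "B \<subseteq> {(a, b). E a b}" and "V_out B \<subseteq> S" and "v \<notin> S"
  shows "nbhd E v - A_set E (K_ext E B) v \<subseteq> {u. E v u \<and> near2 E v S u}"
proof
  fix u assume u: "u \<in> nbhd E v - A_set E (K_ext E B) v"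
  have sym: "\<And>a b. E a b \<Longrightarrow> E b a" using assms(1) unfolding graph_def by blast
  have B_tail: "\<And>a b. (a, b) \<in> B \<Longrightarrow> a \<in> S \<and> a \<noteq> v \<and> E b a"
    using assms(2-4) sym unfolding V_out_def by blast
  have "E v u" using u unfolding nbhd_def by simp
  then have "u \<noteq> v" using assms(1) unfolding graph_def by blast
  from u consider
      a where "(a, u) \<in> K_ext E B" "a \<noteq> v"
    | "(u, v) \<in> K_ext E B"
    unfolding A_set_def nbhd_def V_in_def del_vertex_def in_nbhd_def by blast
  then have "near2 E v S u"
  proof cases
    case (1 a)
    then consider "(a, u) \<in> B" | x where "(x, a) \<in> B" "E a u"
      unfolding K_ext_def by blast
    then show ?thesis
      by cases (use 1 \<open>u \<noteq> v\<close> B_tail sym in \<open>unfold near2_def, blast+\<close>)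
  next
    case 2
    then consider "(u, v) \<in> B" | x where "(x, u) \<in> B"
      unfolding K_ext_def by blast
    then show ?thesis
      by cases (use \<open>u \<noteq> v\<close> B_tail in \<open>unfold near2_def, blast+\<close>)
  qed
  with \<open>E v u\<close> show "u \<in> {u. E v u \<and> near2 E v S u}" by blast
qed

theorem proposition2p8:
  fixes V :: "'a set" and E :: "'a \<Rightarrow> 'a \<Rightarrow> bool" and d :: nat
    and X :: "'a set" and B :: "('a \<times> 'a) set"
  assumes "graph V E"
    and "d > 0"
    and "X \<subseteq> V"
    and "escape_way E B"
    and "V_out B \<subseteq> critical_set V E d X"
  shows "\<forall>v \<in> V - critical_set V E d X.
           int (card (A_set E (K_ext E B) v)) \<ge> int (degree E v) - int d"
proof
  fix v assume v: "v \<in> V - critical_set V E d X"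
  let ?A = "A_set E (K_ext E B) v"
  let ?S = "{u. E v u \<and> near2 E v (critical_set V E d X) u}"
  have "B \<subseteq> {(a, b). E a b}"
    using assms(4) unfolding escape_way_def oriented_subgraph_def by blast
  then have "nbhd E v \<subseteq> ?A \<union> ?S"
    using nbhd_diff_A_set_K_ext_near2[OF assms(1)] assms(5) v by blast
  moreover have "finite ?A" "finite ?S"
    using graph_finite_nbhd[OF assms(1), of v] by (auto simp: A_set_def nbhd_def)
  ultimately have "degree E v \<le> card ?A + card ?S"
    unfolding degree_def by (meson card_Un_le card_mono finite_UnI le_trans)
  moreover have "card ?S < d"
    using card_near2_critical_set_less[OF assms(1)] v by blast
  ultimately show "int (card ?A) \<ge> int (degree E v) - int d" by linarith
qed

end
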